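(* Let $R$ be a commutative noetherian local ring and let $M$ be a right bounded $R$-complex with $\operatorname{depth}_R M_i\ge \operatorname{depth}R$ for all $i$. If $\operatorname{depth}_R \mathrm{H}_i(M)\ge \operatorname{depth}R-1$ for all $i$, then $\operatorname{depth}_R \mathrm{Z}_i(M)\ge\operatorname{depth}R$ and $\operatorname{depth}_R\mathrm{B}_i(M)\ge\operatorname{depth}R$ for all $i$.
   Context: For an $R$-complex $M$ with differential $\partial$: $\mathrm{Z}_i(M)=\ker\partial_i$, $\mathrm{B}_i(M)=\operatorname{im}\partial_{i+1}$, $\mathrm{H}_i(M)=\mathrm{Z}_i(M)/\mathrm{B}_i(M)$. By convention the depth of the zero module is $+\infty$. *)

theory Defs
  imports Main "HOL-Library.Extended_Nat"
begin

definition ring_ideal :: "'a::comm_ring_1 set \<Rightarrow> bool" where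
  "ring_ideal I \<longleftrightarrow> module.subspace ((*) :: 'a \<Rightarrow> 'a \<Rightarrow> 'a) I"

definition ideal_gen :: "'a::comm_ring_1 list \<Rightarrow> 'a set" where
  "ideal_gen xs = module.span ((*) :: 'a \<Rightarrow> 'a \<Rightarrow> 'a) (set xs)"

definition noetherian_ring :: "'a::comm_ring_1 itself \<Rightarrow> bool" where
  "noetherian_ring _ \<longleftrightarrow> (\<forall>I :: 'a set. ring_ideal I \<longrightarrow> (\<exists>xs. I = ideal_gen xs))"

definition maximal_ideal :: "'a::comm_ring_1 set \<Rightarrow> bool" where
  "maximal_ideal m \<longleftrightarrow> ring_ideal m \<and> m \<noteq> UNIV \<and>
     (\<forall>J. ring_ideal J \<longrightarrow> m \<subseteq> J \<longrightarrow> J = m \<or> J = UNIV)"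

definition local_ring :: "'a::comm_ring_1 itself \<Rightarrow> bool" where
  "local_ring _ \<longleftrightarrow> (\<exists>!m :: 'a set. maximal_ideal m)"

definition the_max_ideal :: "'a::comm_ring_1 itself \<Rightarrow> 'a set" where
  "the_max_ideal _ = (THE m :: 'a set. maximal_ideal m)"

definition max_ideal_gens :: "'a::comm_ring_1 itself \<Rightarrow> 'a list" where
  "max_ideal_gens T = (SOME xs. ideal_gen xs = the_max_ideal T)"

text \<open>Chains in degree p: families indexed by p-element subsets of the index set {0..<n},
  with values in N (basis of the exterior power).\<close>
definition kos_chains :: "nat \<Rightarrow> 'm::ab_group_add set \<Rightarrow> nat \<Rightarrow> (nat set \<Rightarrow> 'm) set" where
  "kos_chains n N p = {f. (\<forall>S. f S \<in> N) \<and> (\<forall>S. (card S \<noteq> p \<or> \<not> S \<subseteq> {..<n}) \<longrightarrow> f S = 0)}"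

text \<open>Koszul differential: e_{j_1}\<and>...\<and>e_{j_p} \<mapsto> \<Sum>_k (-1)^(k+1) x_{j_k} e_{j_1}..(omit j_k)..e_{j_p}.\<close>
definition kos_d :: "('a::comm_ring_1 \<Rightarrow> 'm::ab_group_add \<Rightarrow> 'm) \<Rightarrow> 'a list \<Rightarrow> (nat set \<Rightarrow> 'm) \<Rightarrow> nat set \<Rightarrow> 'm" where
  "kos_d smult xs f T =
     (\<Sum>j \<in> {..<length xs} - T. smult ((-1) ^ card {i \<in> T. i < j} * xs ! j) (f (insert j T)))"

text \<open>H_p(x; N/L) \<noteq> 0 (chains of N/L represented by chains of N modulo chains of L).\<close>
definition kos_H_nonzero :: "('a::comm_ring_1 \<Rightarrow> 'm::ab_group_add \<Rightarrow> 'm) \<Rightarrow> 'a list \<Rightarrow> 'm set \<Rightarrow> 'm set \<Rightarrow> nat \<Rightarrow> bool" where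
  "kos_H_nonzero smult xs N L p \<longleftrightarrow>
     (\<exists>f \<in> kos_chains (length xs) N p.
        (\<forall>T. kos_d smult xs f T \<in> L) \<and>
        \<not> (\<exists>g \<in> kos_chains (length xs) N (Suc p). \<forall>S. f S - kos_d smult xs g S \<in> L))"

definition depth_quot :: "('a::comm_ring_1 \<Rightarrow> 'm::ab_group_add \<Rightarrow> 'm) \<Rightarrow> 'm set \<Rightarrow> 'm set \<Rightarrow> enat" where
  "depth_quot smult N L =
     (let xs = max_ideal_gens TYPE('a) in
      if \<forall>p. \<not> kos_H_nonzero smult xs N L p then \<infinity>
      else enat (length xs - Max {p. kos_H_nonzero smult xs N L p}))"

definition depth_mod :: "('a::comm_ring_1 \<Rightarrow> 'm::ab_group_add \<Rightarrow> 'm) \<Rightarrow> 'm set \<Rightarrow> enat" where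
  "depth_mod smult N = depth_quot smult N {0}"

definition depth_ring :: "'a::comm_ring_1 itself \<Rightarrow> enat" where
  "depth_ring _ = depth_mod ((*) :: 'a \<Rightarrow> 'a \<Rightarrow> 'a) UNIV"

definition is_complex :: "('a::comm_ring_1 \<Rightarrow> 'm::ab_group_add \<Rightarrow> 'm) \<Rightarrow> (int \<Rightarrow> 'm set) \<Rightarrow> (int \<Rightarrow> 'm \<Rightarrow> 'm) \<Rightarrow> bool" where
  "is_complex smult M d \<longleftrightarrow> module smult \<and>
     (\<forall>i. module.subspace smult (M i)) \<and>
     (\<forall>i. \<forall>x \<in> M i. d i x \<in> M (i - 1)) \<and>
     (\<forall>i. \<forall>x \<in> M i. \<forall>y \<in> M i. d i (x + y) = d i x + d i y) \<and>
     (\<forall>i a. \<forall>x \<in> M i. d i (smult a x) = smult a (d i x)) \<and>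
     (\<forall>i. \<forall>x \<in> M i. d (i - 1) (d i x) = 0)"

definition right_bounded :: "(int \<Rightarrow> 'm::zero set) \<Rightarrow> bool" where
  "right_bounded M \<longleftrightarrow> (\<exists>b. \<forall>i < b. M i = {0})"

definition cycles :: "(int \<Rightarrow> 'm::zero set) \<Rightarrow> (int \<Rightarrow> 'm \<Rightarrow> 'm) \<Rightarrow> int \<Rightarrow> 'm set" where
  "cycles M d i = {x \<in> M i. d i x = 0}"

definition boundaries :: "(int \<Rightarrow> 'm set) \<Rightarrow> (int \<Rightarrow> 'm \<Rightarrow> 'm) \<Rightarrow> int \<Rightarrow> 'm set" where
  "boundaries M d i = d (i + 1) ` M (i + 1)"

definition depth_homology :: "('a::comm_ring_1 \<Rightarrow> 'm::ab_group_add \<Rightarrow> 'm) \<Rightarrow> (int \<Rightarrow> 'm set) \<Rightarrow> (int \<Rightarrow> 'm \<Rightarrow> 'm) \<Rightarrow> int \<Rightarrow> enat" where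
  "depth_homology smult M d i = depth_quot smult (cycles M d i) (boundaries M d i)"

end

theory Submission
  imports Defs
begin

(* A short exact sequence
   0 -> K -> N -> C -> 0 gives an exact piece H_(p+1)(x; C) -> H_p(x; K) -> H_p(x; N) of the long
   exact Koszul sequence, hence the depth lemma depth K \<ge> min (depth N) (depth C + 1). This holds
   for Koszul homology on any sequence.
   Applied to 0 -> Z_i -> M_i -> B_(i-1) -> 0 it turns depth B_(i-1) \<ge> depth R into
   depth Z_i \<ge> depth R, and applied to 0 -> B_i -> Z_i -> H_i -> 0 it turns this into
   depth B_i \<ge> depth R. As B_i = 0 for i far to the right, induction on i gives both claims. *)

lemma card_less_insert:
  "card {i \<in> insert a T. i < (b::nat)} =
     (if a < b \<and> a \<notin> T then Suc (card {i \<in> T. i < b}) else card {i \<in> T. i < b})"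
proof -
  have "finite {i \<in> T. i < b}" by (rule finite_subset[of _ "{..<b}"]) auto
  moreover have "{i \<in> insert a T. i < b} = (if a < b then insert a {i \<in> T. i < b} else {i \<in> T. i < b})"
    by auto
  ultimately show ?thesis by (auto simp: insert_absorb)
qed

lemma sum_sum_antisym_eq_0:
  fixes G :: "'i::linorder \<Rightarrow> 'i \<Rightarrow> 'b::ab_group_add"
  assumes "finite U" and anti: "\<And>j k. j \<in> U \<Longrightarrow> k \<in> U \<Longrightarrow> j < k \<Longrightarrow> G k j = - G j k"
  shows "(\<Sum>j\<in>U. \<Sum>k\<in>U - {j}. G j k) = 0"
proof -
  define Gt where "Gt j k = (if j < k then G j k else 0)" for j k
  have "(\<Sum>k\<in>U - {j}. G j k) = (\<Sum>k\<in>U. Gt j k - Gt k j)" if "j \<in> U" for j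
  proof -
    have "(\<Sum>k\<in>U - {j}. G j k) = (\<Sum>k\<in>U. if k \<noteq> j then G j k else 0)"
      using sum.inter_filter[OF \<open>finite U\<close>, of "G j" "\<lambda>k. k \<noteq> j"]
      by (simp add: set_diff_eq conj_commute)
    also have "\<dots> = (\<Sum>k\<in>U. Gt j k - Gt k j)"
    proof (rule sum.cong[OF refl])
      fix k assume "k \<in> U"
      then show "(if k \<noteq> j then G j k else 0) = Gt j k - Gt k j"
        using anti[of j k] anti[of k j] that by (cases j k rule: linorder_cases) (auto simp: Gt_def)
    qed
    finally show ?thesis .
  qed
  then have "(\<Sum>j\<in>U. \<Sum>k\<in>U - {j}. G j k) = (\<Sum>j\<in>U. \<Sum>k\<in>U. Gt j k) - (\<Sum>j\<in>U. \<Sum>k\<in>U. Gt k j)"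
    by (simp add: sum_subtractf)
  also have "(\<Sum>j\<in>U. \<Sum>k\<in>U. Gt k j) = (\<Sum>j\<in>U. \<Sum>k\<in>U. Gt j k)"
    by (rule sum.swap)
  finally show ?thesis by simp
qed

definition linear_on_set :: "('a \<Rightarrow> 'b \<Rightarrow> 'b) \<Rightarrow> 'b::plus set \<Rightarrow> ('b \<Rightarrow> 'b) \<Rightarrow> bool" where
  "linear_on_set scale N \<phi> \<longleftrightarrow>
     (\<forall>x\<in>N. \<forall>y\<in>N. \<phi> (x + y) = \<phi> x + \<phi> y) \<and> (\<forall>a. \<forall>x\<in>N. \<phi> (scale a x) = scale a (\<phi> x))"

context module
begin

lemma linear_on_set_0:
  assumes "subspace N" "linear_on_set scale N \<phi>"
  shows "\<phi> 0 = 0"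
proof -
  have "\<phi> 0 = \<phi> 0 + \<phi> 0"
    using assms subspace_0 unfolding linear_on_set_def by (metis add_0)
  then show ?thesis by simp
qed

lemma linear_on_set_diff:
  assumes "subspace N" "linear_on_set scale N \<phi>" "x \<in> N" "y \<in> N"
  shows "\<phi> (x - y) = \<phi> x - \<phi> y"
proof -
  have "\<phi> x = \<phi> (x - y) + \<phi> y"
    using assms subspace_diff unfolding linear_on_set_def by (metis diff_add_cancel)
  then show ?thesis by simp
qed

lemma linear_on_set_sum:
  assumes "subspace N" "linear_on_set scale N \<phi>" "\<And>x. x \<in> A \<Longrightarrow> g x \<in> N"
  shows "\<phi> (sum g A) = (\<Sum>x\<in>A. \<phi> (g x))"
  using assms(3)
proof (induction A rule: infinite_finite_induct)
  case (insert a A)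
  then have "sum g A \<in> N" using assms(1) by (intro subspace_sum) auto
  then show ?case using insert assms(2) unfolding linear_on_set_def by simp
qed (use assms linear_on_set_0 in auto)

lemma kos_d_diff: "kos_d scale xs (\<lambda>S. f S - g S) T = kos_d scale xs f T - kos_d scale xs g T"
  unfolding kos_d_def by (simp add: scale_right_diff_distrib sum_subtractf)

lemma kos_d_kos_d: "kos_d scale xs (kos_d scale xs f) T = 0"
proof -
  define U where "U = {..<length xs} - T"
  define e where "e A j = (-1::'a) ^ card {i \<in> A. i < j}" for A :: "nat set" and j
  define G where "G j k = scale (e T j * xs ! j * (e (insert j T) k * xs ! k))
    (f (insert k (insert j T)))" for j k
  have "{..<length xs} - insert j T = U - {j}" if "j \<in> U" for j
    using that unfolding U_def by auto
  then have "kos_d scale xs (kos_d scale xs f) T = (\<Sum>j\<in>U. \<Sum>k\<in>U - {j}. G j k)"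
    unfolding kos_d_def U_def[symmetric]
    by (intro sum.cong refl) (simp add: scale_sum_right G_def e_def)
  also have "\<dots> = 0"
  proof (rule sum_sum_antisym_eq_0)
    fix j k assume "j \<in> U" "k \<in> U" "j < k"
    then have "e (insert j T) k = - e T k" "e (insert k T) j = e T j"
      unfolding e_def card_less_insert by (auto simp: U_def)
    moreover have "insert j (insert k T) = insert k (insert j T)" by auto
    ultimately show "G k j = - G j k"
      unfolding G_def by (simp add: scale_minus_left[symmetric] mult_ac del: scale_minus_left)
  qed (simp add: U_def)
  finally show ?thesis .
qed

lemma kos_d_linear_on_set:
  assumes "subspace N" "linear_on_set scale N \<phi>" "\<And>S. h S \<in> N"
  shows "\<phi> (kos_d scale xs h T) = kos_d scale xs (\<lambda>S. \<phi> (h S)) T"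
  using assms unfolding kos_d_def
  by (subst linear_on_set_sum) (auto simp: linear_on_set_def intro: subspace_scale)

lemma kos_d_in_kos_chains:
  assumes "subspace N" "f \<in> kos_chains (length xs) N (Suc p)"
  shows "kos_d scale xs f \<in> kos_chains (length xs) N p"
  unfolding kos_chains_def
proof (intro CollectI conjI allI impI)
  fix S
  show "kos_d scale xs f S \<in> N"
    using assms unfolding kos_d_def kos_chains_def by (auto intro!: subspace_sum subspace_scale)
next
  fix S assume S: "card S \<noteq> p \<or> \<not> S \<subseteq> {..<length xs}"
  have "f (insert j S) = 0" if "j \<in> {..<length xs} - S" for j
  proof -
    have "card (insert j S) \<noteq> Suc p \<or> \<not> insert j S \<subseteq> {..<length xs}"
      using S that finite_subset[of S "{..<length xs}"] by (cases "finite S") auto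
    then show ?thesis using assms(2) by (auto simp: kos_chains_def)
  qed
  then show "kos_d scale xs f S = 0" unfolding kos_d_def by simp
qed

lemma kos_chains_image:
  assumes "subspace N" "linear_on_set scale N \<phi>" "h \<in> kos_chains n N p"
  shows "(\<lambda>S. \<phi> (h S)) \<in> kos_chains n (\<phi> ` N) p"
  using assms linear_on_set_0 unfolding kos_chains_def by auto

lemma kos_chains_lift:
  assumes "subspace N" "linear_on_set scale N \<phi>" "k \<in> kos_chains n (\<phi> ` N) p"
  obtains k' where "k' \<in> kos_chains n N p" "(\<lambda>S. \<phi> (k' S)) = k"
proof
  define k' where "k' S = (if k S = 0 then 0 else SOME y. y \<in> N \<and> \<phi> y = k S)" for S
  have "k' S \<in> N \<and> \<phi> (k' S) = k S" for S
  proof (cases "k S = 0")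
    case True
    then show ?thesis using assms linear_on_set_0 subspace_0 by (simp add: k'_def)
  next
    case False
    have "k S \<in> \<phi> ` N" using assms(3) by (auto simp: kos_chains_def)
    then have "\<exists>y. y \<in> N \<and> \<phi> y = k S" by (auto simp: image_iff)
    from someI_ex[OF this] show ?thesis using False by (simp add: k'_def)
  qed
  then show "k' \<in> kos_chains n N p" "(\<lambda>S. \<phi> (k' S)) = k"
    using assms(3) by (auto simp: kos_chains_def k'_def)
qed

lemma kos_H_nonzero_imp_nonzero_chain:
  assumes "0 \<in> L" "kos_H_nonzero scale xs N L p"
  shows "\<exists>f \<in> kos_chains (length xs) N p. \<exists>S. f S \<noteq> 0"
proof (rule ccontr)
  assume "\<not> ?thesis"
  moreover obtain f where f: "f \<in> kos_chains (length xs) N p"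
    and not_bd: "\<not> (\<exists>g \<in> kos_chains (length xs) N (Suc p). \<forall>S. f S - kos_d scale xs g S \<in> L)"
    using assms(2) unfolding kos_H_nonzero_def by blast
  ultimately have "f = (\<lambda>S. 0)" by auto
  then have "(\<lambda>S. 0) \<in> kos_chains (length xs) N (Suc p)"
    using f by (auto simp: kos_chains_def)
  moreover have "kos_d scale xs (\<lambda>S. 0) S = 0" for S
    unfolding kos_d_def by simp
  ultimately show False
    using not_bd \<open>f = (\<lambda>S. 0)\<close> assms(1) by auto
qed

lemma kos_H_nonzero_le_length:
  assumes "0 \<in> L" "kos_H_nonzero scale xs N L p"
  shows "p \<le> length xs"
proof (rule ccontr)
  assume "\<not> p \<le> length xs"
  then have "card S \<noteq> p \<or> \<not> S \<subseteq> {..<length xs}" for S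
    using card_mono[of "{..<length xs}" S] by auto
  then show False
    using kos_H_nonzero_imp_nonzero_chain[OF assms] by (auto simp: kos_chains_def)
qed

lemma depth_mod_zero: "depth_mod scale {0} = \<infinity>"
proof -
  have "\<not> kos_H_nonzero scale xs {0} {0} p" for xs p
  proof
    assume "kos_H_nonzero scale xs {0} {0} p"
    then have "\<exists>f \<in> kos_chains (length xs) {0::'b} p. \<exists>S. f S \<noteq> 0"
      by (rule kos_H_nonzero_imp_nonzero_chain[OF singletonI])
    then show False by (auto simp: kos_chains_def)
  qed
  then show ?thesis unfolding depth_mod_def depth_quot_def Let_def by simp
qed

lemma le_depth_quot_iff:
  assumes "0 \<in> L"
  shows "t \<le> depth_quot scale N L \<longleftrightarrow>
    (\<forall>p. kos_H_nonzero scale (max_ideal_gens TYPE('a)) N L p \<longrightarrow>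
       t \<le> enat (length (max_ideal_gens TYPE('a)) - p))"
proof -
  define xs where "xs = max_ideal_gens TYPE('a)"
  define P where "P = {p. kos_H_nonzero scale xs N L p}"
  have "finite P"
    by (rule finite_subset[of _ "{..length xs}"])
      (auto simp: P_def intro: kos_H_nonzero_le_length[OF assms])
  show ?thesis
  proof (cases "P = {}")
    case True
    then show ?thesis unfolding depth_quot_def xs_def[symmetric] P_def by auto
  next
    case False
    then have "depth_quot scale N L = enat (length xs - Max P)"
      unfolding depth_quot_def xs_def[symmetric] P_def by auto
    moreover have "Max P \<in> P" using \<open>finite P\<close> False by simp
    moreover have "enat (length xs - Max P) \<le> enat (length xs - p)" if "p \<in> P" for p
      using \<open>finite P\<close> that by (simp add: diff_le_mono2)
    ultimately show ?thesis unfolding xs_def[symmetric] P_def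
      by (auto intro: order_trans)
  qed
qed

(* {x \<in> N. \<phi> x \<in> L} is the kernel of the surjection N -> \<phi>(N)/L induced by \<phi>; the conclusion is
   exactness of H_(p+1)(x; \<phi>(N)/L) -> H_p(x; kernel) -> H_p(x; N) in the middle. *)
lemma kos_H_nonzero_preimage_cases:
  assumes N: "subspace N" and \<phi>: "linear_on_set scale N \<phi>"
    and "kos_H_nonzero scale xs {x \<in> N. \<phi> x \<in> L} {0} p"
  shows "kos_H_nonzero scale xs N {0} p \<or> kos_H_nonzero scale xs (\<phi> ` N) L (Suc p)"
proof (rule ccontr)
  define n where "n = length xs"
  define K where "K = {x \<in> N. \<phi> x \<in> L}"
  assume "\<not> ?thesis"
  then have acyclic_N: "\<not> kos_H_nonzero scale xs N {0} p"
    and acyclic_C: "\<not> kos_H_nonzero scale xs (\<phi> ` N) L (Suc p)" by auto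
  obtain f where f: "f \<in> kos_chains n K p" "\<forall>T. kos_d scale xs f T = 0"
    and not_bd: "\<not> (\<exists>g \<in> kos_chains n K (Suc p). \<forall>S. f S = kos_d scale xs g S)"
    using assms(3) unfolding kos_H_nonzero_def K_def n_def by auto
  have "f \<in> kos_chains n N p" using f(1) by (auto simp: kos_chains_def K_def)
  with acyclic_N f(2) obtain h where h: "h \<in> kos_chains n N (Suc p)" "\<forall>S. f S = kos_d scale xs h S"
    unfolding kos_H_nonzero_def n_def by auto
  have hN: "h S \<in> N" for S using h(1) by (auto simp: kos_chains_def)
  have "kos_d scale xs (\<lambda>S. \<phi> (h S)) T \<in> L" for T
    using kos_d_linear_on_set[OF N \<phi> hN] h(2) f(1) by (auto simp: kos_chains_def K_def)
  with acyclic_C kos_chains_image[OF N \<phi> h(1)] obtain k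
    where k: "k \<in> kos_chains n (\<phi> ` N) (Suc (Suc p))" "\<forall>S. \<phi> (h S) - kos_d scale xs k S \<in> L"
    unfolding kos_H_nonzero_def n_def by blast
  obtain k' where k': "k' \<in> kos_chains n N (Suc (Suc p))" "(\<lambda>S. \<phi> (k' S)) = k"
    using kos_chains_lift[OF N \<phi> k(1)] .
  have dk': "kos_d scale xs k' \<in> kos_chains n N (Suc p)"
    using kos_d_in_kos_chains[OF N] k'(1) n_def by simp
  define g where "g S = h S - kos_d scale xs k' S" for S
  \<comment> \<open>correcting h by a boundary makes it a chain of K, with the same boundary f\<close>
  have "\<phi> (g S) \<in> L" for S
  proof -
    have "\<phi> (kos_d scale xs k' S) = kos_d scale xs k S"
      using kos_d_linear_on_set[OF N \<phi>] k' by (auto simp: kos_chains_def)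
    then show ?thesis
      using k(2) linear_on_set_diff[OF N \<phi> hN] dk' by (auto simp: g_def kos_chains_def)
  qed
  then have "g \<in> kos_chains n K (Suc p)"
    using h(1) dk' subspace_diff[OF N] by (auto simp: kos_chains_def K_def g_def)
  moreover have "f S = kos_d scale xs g S" for S
    using h(2) unfolding g_def kos_d_diff kos_d_kos_d by simp
  ultimately show False using not_bd by blast
qed

lemma depth_preimage_ge:
  assumes N: "subspace N" and \<phi>: "linear_on_set scale N \<phi>" and "0 \<in> L"
  shows "min (depth_mod scale N) (depth_quot scale (\<phi> ` N) L + 1)
    \<le> depth_mod scale {x \<in> N. \<phi> x \<in> L}"
proof -
  define xs where "xs = max_ideal_gens TYPE('a)"
  define t where "t = min (depth_mod scale N) (depth_quot scale (\<phi> ` N) L + 1)"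
  have "t \<le> enat (length xs - p)" if "kos_H_nonzero scale xs {x \<in> N. \<phi> x \<in> L} {0} p" for p
    using kos_H_nonzero_preimage_cases[OF N \<phi> that]
  proof
    assume "kos_H_nonzero scale xs N {0} p"
    then have "depth_mod scale N \<le> enat (length xs - p)"
      using le_depth_quot_iff[of "{0}" "depth_mod scale N" N] by (simp add: depth_mod_def xs_def)
    then show ?thesis unfolding t_def by (simp add: min.coboundedI1)
  next
    assume H: "kos_H_nonzero scale xs (\<phi> ` N) L (Suc p)"
    then have "depth_quot scale (\<phi> ` N) L \<le> enat (length xs - Suc p)"
      using le_depth_quot_iff[OF \<open>0 \<in> L\<close>, of "depth_quot scale (\<phi> ` N) L" "\<phi> ` N"] by (simp add: xs_def)
    moreover have "Suc p \<le> length xs" using kos_H_nonzero_le_length[OF \<open>0 \<in> L\<close> H] .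
    then have "enat (length xs - Suc p) + 1 = enat (length xs - p)"
      by (simp add: one_enat_def)
    ultimately have "depth_quot scale (\<phi> ` N) L + 1 \<le> enat (length xs - p)"
      by (metis add_right_mono)
    then show ?thesis unfolding t_def by (simp add: min.coboundedI2)
  qed
  then show ?thesis
    using le_depth_quot_iff[of "{0}" t] unfolding t_def depth_mod_def xs_def by simp
qed

end

lemma enat_le_plus_1_if_minus_1_le:
  fixes t :: enat
  assumes "t - 1 \<le> x"
  shows "t \<le> x + 1"
  using assms by (cases t; cases x) (auto simp: one_enat_def)

lemma int_induct_from_below:
  fixes b :: int
  assumes "\<And>i. i < b \<Longrightarrow> P i" and "\<And>i. P (i - 1) \<Longrightarrow> P i"
  shows "P i"
proof (cases "i < b")
  case False
  then have "b \<le> i" by simp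
  then show ?thesis
  proof (induction i rule: int_ge_induct)
    case base
    then show ?case using assms by simp
  next
    case (step i)
    then show ?case using assms(2)[of "i + 1"] by simp
  qed
qed (rule assms(1))

lemma complex_subspace: "is_complex smult M d \<Longrightarrow> module.subspace smult (M i)"
  by (simp add: is_complex_def)

lemma complex_linear_on_set: "is_complex smult M d \<Longrightarrow> linear_on_set smult (M i) (d i)"
  by (simp add: is_complex_def linear_on_set_def)

lemma complex_d_0:
  assumes "is_complex smult M d"
  shows "d i 0 = 0"
proof -
  interpret module smult using assms by (simp add: is_complex_def)
  show ?thesis using linear_on_set_0[OF complex_subspace complex_linear_on_set, OF assms assms] .
qed

lemma complex_closed: "is_complex smult M d \<Longrightarrow> x \<in> M i \<Longrightarrow> d i x \<in> M (i - 1)"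
  by (simp add: is_complex_def)

lemma complex_dd: "is_complex smult M d \<Longrightarrow> x \<in> M i \<Longrightarrow> d (i - 1) (d i x) = 0"
  by (simp add: is_complex_def)

lemma boundaries_subset_cycles:
  assumes "is_complex smult M d"
  shows "boundaries M d i \<subseteq> cycles M d i"
proof
  fix z assume "z \<in> boundaries M d i"
  then obtain y where "y \<in> M (i + 1)" "z = d (i + 1) y" unfolding boundaries_def by auto
  then show "z \<in> cycles M d i"
    using complex_closed[OF assms, of y "i + 1"] complex_dd[OF assms, of y "i + 1"]
    unfolding cycles_def by simp
qed

lemma depth_cycles_ge:
  assumes "is_complex smult M d"
  shows "min (depth_mod smult (M i)) (depth_mod smult (boundaries M d (i - 1)) + 1)
    \<le> depth_mod smult (cycles M d i)"
proof -
  interpret module smult using assms by (simp add: is_complex_def)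
  have "boundaries M d (i - 1) = d i ` M i" unfolding boundaries_def by simp
  moreover have "cycles M d i = {x \<in> M i. d i x \<in> {0}}" unfolding cycles_def by simp
  ultimately show ?thesis
    using depth_preimage_ge[OF complex_subspace complex_linear_on_set, OF assms assms, of "{0}"]
    unfolding depth_mod_def by simp
qed

lemma subspace_cycles:
  assumes "is_complex smult M d"
  shows "module.subspace smult (cycles M d i)"
proof -
  interpret module smult using assms by (simp add: is_complex_def)
  have M: "subspace (M i)" using complex_subspace[OF assms] .
  have d: "linear_on_set smult (M i) (d i)" using complex_linear_on_set[OF assms] .
  show ?thesis unfolding cycles_def
  proof (rule subspaceI)
    show "0 \<in> {x \<in> M i. d i x = 0}" using subspace_0[OF M] complex_d_0[OF assms] by simp
  next
    fix x y assume "x \<in> {x \<in> M i. d i x = 0}" "y \<in> {x \<in> M i. d i x = 0}"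
    then show "x + y \<in> {x \<in> M i. d i x = 0}"
      using subspace_add[OF M] d by (simp add: linear_on_set_def)
  next
    fix c x assume "x \<in> {x \<in> M i. d i x = 0}"
    then show "smult c x \<in> {x \<in> M i. d i x = 0}"
      using subspace_scale[OF M] d by (simp add: linear_on_set_def)
  qed
qed

lemma zero_in_boundaries:
  assumes "is_complex smult M d"
  shows "0 \<in> boundaries M d i"
proof -
  interpret module smult using assms by (simp add: is_complex_def)
  have "0 \<in> M (i + 1)" using subspace_0[OF complex_subspace[OF assms]] .
  then show ?thesis unfolding boundaries_def using complex_d_0[OF assms] by (metis image_eqI)
qed

lemma depth_boundaries_ge:
  assumes "is_complex smult M d"
  shows "min (depth_mod smult (cycles M d i)) (depth_homology smult M d i + 1)
    \<le> depth_mod smult (boundaries M d i)"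
proof -
  interpret module smult using assms by (simp add: is_complex_def)
  have "linear_on_set smult (cycles M d i) id" by (simp add: linear_on_set_def)
  from depth_preimage_ge[OF subspace_cycles[OF assms] this zero_in_boundaries[OF assms]]
  have "min (depth_mod smult (cycles M d i)) (depth_homology smult M d i + 1)
    \<le> depth_mod smult {x \<in> cycles M d i. x \<in> boundaries M d i}"
    unfolding depth_homology_def by simp
  moreover have "{x \<in> cycles M d i. x \<in> boundaries M d i} = boundaries M d i"
    using boundaries_subset_cycles[OF assms] by auto
  ultimately show ?thesis by simp
qed

theorem lemma3p8:
  fixes smult :: "'a::comm_ring_1 \<Rightarrow> 'm::ab_group_add \<Rightarrow> 'm"
    and M :: "int \<Rightarrow> 'm set" and d :: "int \<Rightarrow> 'm \<Rightarrow> 'm"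
  assumes "noetherian_ring TYPE('a)"
    and "local_ring TYPE('a)"
    and "is_complex smult M d"
    and "right_bounded M"
    and "\<forall>i. depth_mod smult (M i) \<ge> depth_ring TYPE('a)"
    and "\<forall>i. depth_homology smult M d i \<ge> depth_ring TYPE('a) - 1"
  shows "\<forall>i. depth_mod smult (cycles M d i) \<ge> depth_ring TYPE('a) \<and>
             depth_mod smult (boundaries M d i) \<ge> depth_ring TYPE('a)"
proof -
  interpret module smult using assms(3) by (simp add: is_complex_def)
  define t where "t = depth_ring TYPE('a)"
  have cycles: "t \<le> depth_mod smult (cycles M d i)"
    if "t \<le> depth_mod smult (boundaries M d (i - 1))" for i
    using depth_cycles_ge[OF assms(3), of i] assms(5) add_increasing2[OF zero_le_one that]
    unfolding t_def by (meson min.boundedI order_trans)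
  have "t \<le> depth_homology smult M d i + 1" for i
    using assms(6) unfolding t_def by (simp add: enat_le_plus_1_if_minus_1_le)
  then have boundaries: "t \<le> depth_mod smult (boundaries M d i)"
    if "t \<le> depth_mod smult (cycles M d i)" for i
    using depth_boundaries_ge[OF assms(3), of i] that by (meson min.boundedI order_trans)
  obtain b where "\<forall>i < b. M i = {0}"
    using assms(4) unfolding right_bounded_def by blast
  then have "boundaries M d i = {0}" if "i < b - 1" for i
    using that complex_d_0[OF assms(3)] unfolding boundaries_def by simp
  then have "t \<le> depth_mod smult (boundaries M d i)" for i
    using depth_mod_zero boundaries cycles by (induction i rule: int_induct_from_below[of "b - 1"]) simp_all
  then show ?thesis using cycles unfolding t_def by blast
qed

end
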